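(* In the setting below ($\bar{\mathbf Q}=\mathbf Q+\mathbf\Delta$), the matrices $\mathbf Q$ and $\mathbf\Delta$ are uniquely determined by $\bar{\mathbf Q}$. More precisely: for every $i\in[d]$ and $m$-subset $\mathcal I\subseteq[d]$ with $i>\max\mathcal I$, $i\notin\mathcal B$ and $\mathcal I\cap\mathcal B=\varnothing$, $$\mathbf Q_{i,\mathcal I}=(-1)^{\sigma_Q(i)+m}\sum_{t\in\mathcal I}(-1)^{\sigma_Q(t)+\mathrm{ind}_{\mathcal I}(t)}\,\bar{\mathbf Q}_{t,(\mathcal I\cup\{i\})\setminus\{t\}},$$ and $\mathbf\Delta_{i,\mathcal I}=\bar{\mathbf Q}_{i,\mathcal I}-\mathbf Q_{i,\mathcal I}$; for all other positions $(i,\mathcal I)$, $\mathbf\Delta_{i,\mathcal I}=0$ and $\mathbf Q_{i,\mathcal I}=\bar{\mathbf Q}_{i,\mathcal I}$.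
   Context: Notation: $[d]=\{1,\dots,d\}$; $\mathrm{ind}_{\mathcal I}(x)=|\{y\in\mathcal I:y\le x\}|$; $\max\varnothing=-\infty$. Setting: $\mathbb F$ a field, $d\ge1$, $j\ge1$, $\mathcal B\subseteq[d]$ with $|\mathcal B|\le j-1$, $m=j-|\mathcal B|-1$, $x\in[d]$, $\sigma_P\in\mathbb Z^d$, $\mathbf P$ an arbitrary matrix over $\mathbb F$ with rows $[d]$ and columns the $j$-subsets of $[d]$, $\sigma_Q(i)=1+\sigma_P(i)+\mathrm{ind}_{\mathcal B\cup\{i\}}(i)$. $\mathbf Q$ is a $(d;m)$ signed determinant message matrix with signature $\sigma_Q$: choose $v_{x,\mathcal X}\in\mathbb F$ for every $m$-subset $\mathcal X\subseteq[d]$, $x\in\mathcal X$, and $w_{y,\mathcal Y}\in\mathbb F$ for every $(m+1)$-subset $\mathcal Y\subseteq[d]$, $y\in\mathcal Y$, with $\sum_{y\in\mathcal Y}(-1)^{\mathrm{ind}_{\mathcal Y}(y)}w_{y,\mathcal Y}=0$; then $\mathbf Q_{x,\mathcal I}=(-1)^{\sigma_Q(x)}v_{x,\mathcal I}$ if $x\in\mathcal I$ and $(-1)^{\sigma_Q(x)}w_{x,\mathcal I\cup\{x\}}$ if $x\notin\mathcal I$, rows $x\in[d]$, columns $m$-subsets $\mathcal I$ (for $m=0$, the all-zero column indexed by $\varnothing$). $\mathbf\Delta$: rows $i\in[d]$, columns $m$-subsets $\mathcal I$, $\mathbf\Delta_{i,\mathcal I}=(-1)^{1+\sigma_P(i)+\mathrm{ind}_{\mathcal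 I\cup\{i\}\cup\mathcal B}(i)}\mathbf P_{x,\mathcal I\cup\{i\}\cup\mathcal B}$ if $i>\max\mathcal I$, $i\notin\mathcal B$, $\mathcal I\cap\mathcal B=\varnothing$, and $0$ otherwise. *)

theory Defs
  imports Main
begin

definition ind :: "nat set \<Rightarrow> nat \<Rightarrow> nat" where
  "ind I x = card {y \<in> I. y \<le> x}"

definition negpow :: "int \<Rightarrow> 'a::comm_ring_1" where
  "negpow k = (if even k then 1 else -1)"

definition sigmaQ :: "(nat \<Rightarrow> int) \<Rightarrow> nat set \<Rightarrow> nat \<Rightarrow> int" where
  "sigmaQ sigP B i = 1 + sigP i + int (ind (B \<union> {i}) i)"

definition sdm_matrix ::
  "(nat \<Rightarrow> int) \<Rightarrow> (nat \<Rightarrow> nat set \<Rightarrow> 'a::comm_ring_1) \<Rightarrow> (nat \<Rightarrow> nat set \<Rightarrow> 'a)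
     \<Rightarrow> nat \<Rightarrow> nat set \<Rightarrow> 'a" where
  "sdm_matrix sig v w x I =
     negpow (sig x) * (if x \<in> I then v x I else w x (insert x I))"

text \<open>The matrix Delta (rows i, columns m-subsets I); the condition i > max I
  (with max of the empty set = -infinity) is written as: all elements of I are < i.\<close>
definition Delta ::
  "(nat \<Rightarrow> int) \<Rightarrow> nat set \<Rightarrow> (nat \<Rightarrow> nat set \<Rightarrow> 'a::comm_ring_1) \<Rightarrow> nat
     \<Rightarrow> nat \<Rightarrow> nat set \<Rightarrow> 'a" where
  "Delta sigP B P x i I =
     (if (\<forall>y\<in>I. y < i) \<and> i \<notin> B \<and> I \<inter> B = {}
      then negpow (1 + sigP i + int (ind (I \<union> {i} \<union> B) i)) * P x (I \<union> {i} \<union> B)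
      else 0)"

end

theory Submission
  imports Defs
begin

text \<open>Where Delta is nonzero, i.e. i > max I, the entry Q i I is read off the entries
  Q t (Y - {t}) for t \<in> I, where Y = insert i I: these involve only w t Y, and since i is the
  largest element of Y, the alternating-sum condition on w (-) Y expresses w i Y through them.
  Delta vanishes at those positions, because the column Y - {t} contains i > t, so Q and Qbar
  agree there.\<close>

lemma negpow_add: "(negpow (a + b) :: 'a::comm_ring_1) = negpow a * negpow b"
  by (auto simp: negpow_def)

lemma negpow_mult_self: "(negpow a :: 'a::comm_ring_1) * negpow a = 1"
  by (auto simp: negpow_def)

lemma negpow_one: "(negpow 1 :: 'a::comm_ring_1) = -1"
  by (simp add: negpow_def)

lemma ind_insert_greater:
  assumes "\<forall>y\<in>I. y < i" and "t \<in> I"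
  shows "ind (insert i I) t = ind I t"
proof -
  have "{y \<in> insert i I. y \<le> t} = {y \<in> I. y \<le> t}" using assms by auto
  then show ?thesis by (simp add: ind_def)
qed

lemma ind_insert_greater_self:
  assumes "finite I" and "\<forall>y\<in>I. y < i"
  shows "ind (insert i I) i = card I + 1"
proof -
  have "{y \<in> insert i I. y \<le> i} = insert i I" using assms(2) by auto
  moreover have "i \<notin> I" using assms(2) by blast
  ultimately show ?thesis using assms(1) by (simp add: ind_def)
qed

lemma alternating_sum_drop_max:
  fixes w :: "nat \<Rightarrow> nat set \<Rightarrow> 'a::comm_ring_1"
  assumes fin: "finite I" and greater: "\<forall>y\<in>I. y < i"
    and alt: "(\<Sum>y\<in>insert i I. negpow (int (ind (insert i I) y)) * w y (insert i I)) = 0"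
  shows "(\<Sum>t\<in>I. negpow (int (ind I t)) * w t (insert i I))
           = negpow (int (card I)) * w i (insert i I)"
proof -
  let ?Y = "insert i I"
  have "i \<notin> I" using greater by blast
  with fin alt have "negpow (int (card I) + 1) * w i ?Y
      + (\<Sum>t\<in>I. negpow (int (ind I t)) * w t ?Y) = 0"
    by (simp add: ind_insert_greater_self[OF fin greater] ind_insert_greater[OF greater]
        add.commute)
  then show ?thesis by (simp add: negpow_add negpow_one add_eq_0_iff2)
qed

lemma sdm_matrix_recover:
  fixes w v Qbar :: "nat \<Rightarrow> nat set \<Rightarrow> 'a::comm_ring_1"
  assumes fin: "finite I" and greater: "\<forall>y\<in>I. y < i"
    and alt: "(\<Sum>y\<in>insert i I. negpow (int (ind (insert i I) y)) * w y (insert i I)) = 0"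
    and agree: "\<And>t. t \<in> I \<Longrightarrow> Qbar t (insert i I - {t}) = sdm_matrix sig v w t (insert i I - {t})"
  shows "sdm_matrix sig v w i I = negpow (sig i + int (card I)) *
           (\<Sum>t\<in>I. negpow (sig t + int (ind I t)) * Qbar t (insert i I - {t}))"
proof -
  have summand_eq: "negpow (sig t + int (ind I t)) * Qbar t (insert i I - {t})
      = negpow (int (ind I t)) * w t (insert i I)" if "t \<in> I" for t
  proof -
    have "Qbar t (insert i I - {t}) = negpow (sig t) * w t (insert i I)"
      using agree[OF that] that greater by (auto simp: sdm_matrix_def insert_absorb)
    then have "negpow (sig t + int (ind I t)) * Qbar t (insert i I - {t})
        = (negpow (sig t) * negpow (sig t)) * (negpow (int (ind I t)) * w t (insert i I))"
      by (simp add: negpow_add ac_simps)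
    then show ?thesis by (simp add: negpow_mult_self)
  qed
  have "i \<notin> I" using greater by blast
  then have "sdm_matrix sig v w i I
      = negpow (sig i) * (negpow (int (card I)) * negpow (int (card I))) * w i (insert i I)"
    by (simp add: sdm_matrix_def negpow_mult_self)
  also have "\<dots> = negpow (sig i + int (card I)) *
      (\<Sum>t\<in>I. negpow (int (ind I t)) * w t (insert i I))"
    by (simp add: alternating_sum_drop_max[where w = w, OF fin greater alt] negpow_add ac_simps)
  also have "\<dots> = negpow (sig i + int (card I)) *
      (\<Sum>t\<in>I. negpow (sig t + int (ind I t)) * Qbar t (insert i I - {t}))"
    by (simp add: summand_eq)
  finally show ?thesis .
qed

lemma Delta_eq_0_if_greater_in_column:
  assumes "k \<in> J" and "\<not> k < i"
  shows "Delta sigP B P x i J = 0"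
  using assms by (auto simp: Delta_def)

theorem lemma2:
  fixes d j m x :: nat and B :: "nat set" and sigP :: "nat \<Rightarrow> int"
    and P :: "nat \<Rightarrow> nat set \<Rightarrow> 'a::field"
    and v w :: "nat \<Rightarrow> nat set \<Rightarrow> 'a"
    and Q Dl Qbar :: "nat \<Rightarrow> nat set \<Rightarrow> 'a"
  assumes "d \<ge> 1" and "j \<ge> 1"
    and "B \<subseteq> {1..d}" and "card B \<le> j - 1"
    and "m = j - card B - 1"
    and "x \<in> {1..d}"
    and w_cond: "\<forall>Y. Y \<subseteq> {1..d} \<and> card Y = m + 1 \<longrightarrow>
                   (\<Sum>y\<in>Y. negpow (int (ind Y y)) * w y Y) = 0"
    and Q_def: "Q = sdm_matrix (sigmaQ sigP B) v w"
    and Dl_def: "Dl = Delta sigP B P x"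
    and Qbar_def: "\<forall>i I. Qbar i I = Q i I + Dl i I"
  shows "\<forall>i\<in>{1..d}. \<forall>I. I \<subseteq> {1..d} \<and> card I = m \<longrightarrow>
     (if (\<forall>y\<in>I. y < i) \<and> i \<notin> B \<and> I \<inter> B = {}
      then Q i I = negpow (sigmaQ sigP B i + int m) *
               (\<Sum>t\<in>I. negpow (sigmaQ sigP B t + int (ind I t)) * Qbar t (insert i I - {t}))
           \<and> Dl i I = Qbar i I - Q i I
      else Dl i I = 0 \<and> Q i I = Qbar i I)"
proof (intro ballI allI impI, goal_cases)
  case (1 i I)
  then have i: "i \<in> {1..d}" and I: "I \<subseteq> {1..d}" "card I = m" by auto
  have fin: "finite I" using I(1) finite_subset by blast
  show ?case
  proof (cases "(\<forall>y\<in>I. y < i) \<and> i \<notin> B \<and> I \<inter> B = {}")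
    case False
    then have "Dl i I = 0" by (auto simp: Dl_def Delta_def)
    then show ?thesis unfolding if_not_P[OF False] using Qbar_def by simp
  next
    case True
    then have greater: "\<forall>y\<in>I. y < i" by blast
    have "card (insert i I) = m + 1" using I fin greater by auto
    then have alt: "(\<Sum>y\<in>insert i I. negpow (int (ind (insert i I) y)) * w y (insert i I)) = 0"
      using w_cond I i by simp
    have "Qbar t (insert i I - {t}) = Q t (insert i I - {t})" if "t \<in> I" for t
    proof -
      have "Dl t (insert i I - {t}) = 0"
        unfolding Dl_def using that greater by (intro Delta_eq_0_if_greater_in_column[of i]) auto
      then show ?thesis using Qbar_def by simp
    qed
    then have "Q i I = negpow (sigmaQ sigP B i + int m) *
        (\<Sum>t\<in>I. negpow (sigmaQ sigP B t + int (ind I t)) * Qbar t (insert i I - {t}))"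
      using sdm_matrix_recover[where w = w, OF fin greater alt] I by (simp add: Q_def)
    then show ?thesis unfolding if_P[OF True] using Qbar_def by simp
  qed
qed

end
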